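(* Let $q\ge2$ be a prime power and let $f\in\mathbb{F}_q[x]$ be nonzero. If $m\ge 1$ is an integer with $q^m\ge \deg f$, then $$E(f)\le \prod_{\deg p\le m}\left(1+\frac{1}{|p|}\right),$$ where the product runs over all monic irreducible polynomials $p\in\mathbb{F}_q[x]$ of degree at most $m$.
   Context: For $f\in\mathbb{F}_q[x]$, $|f|=q^{\deg f}$. The letter $p$ always denotes a monic irreducible polynomial in $\mathbb{F}_q[x]$, and $E(f)=\prod_{p\mid f}\left(1+\frac{1}{|p|}\right)$, the product over monic irreducible divisors $p$ of $f$. *)

theory Defs
  imports "HOL-Computational_Algebra.Computational_Algebra"
begin

definition poly_norm :: "'a::{field,finite} poly \<Rightarrow> real" where
  "poly_norm f = real (card (UNIV :: 'a set)) ^ degree f"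

definition E_fun :: "'a::{field,finite} poly \<Rightarrow> real" where
  "E_fun f = (\<Prod>p\<in>{p. lead_coeff p = 1 \<and> irreducible p \<and> p dvd f}. 1 + 1 / poly_norm p)"

end

theory Submission
  imports Defs
begin

text \<open>Let \<open>q\<close> be the size of the field and \<open>N = q^m\<close>. The polynomial \<open>X^N - X\<close> is squarefree,
  its derivative being \<open>-1\<close>, and each of its irreducible factors \<open>p\<close> has degree at most \<open>m\<close>:
  by the Frobenius identity every \<open>g\<close> satisfies \<open>g^N \<equiv> g (mod p)\<close>, so the \<open>q^(deg p)\<close>
  polynomials of degree below \<open>deg p\<close> are pairwise incongruent roots of \<open>Y^N - Y\<close> modulo the
  prime \<open>p\<close>, whence \<open>q^(deg p) \<le> N\<close>. Hence the monic irreducibles of degree at most \<open>m\<close> have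
  total degree at least \<open>N \<ge> deg f\<close>, which in turn bounds the total degree of the monic
  irreducible divisors of \<open>f\<close>. Comparing total degrees, the divisors of \<open>f\<close> of degree above \<open>m\<close>
  are no more numerous than the irreducibles of degree at most \<open>m\<close> not dividing \<open>f\<close>, so the
  former inject into the latter; as \<open>1 + 1/|p|\<close> decreases with \<open>deg p\<close>, this exchange can only
  increase the product.\<close>

lemma card_UNIV_field_ge_2: "card (UNIV :: 'a::{field,finite} set) \<ge> 2"
proof -
  have "card {0, 1::'a} \<le> card (UNIV :: 'a set)"
    by (rule card_mono) auto
  then show ?thesis
    by simp
qed

lemma card_UNIV_power_ge_2:
  assumes "1 \<le> m"
  shows "2 \<le> card (UNIV :: 'a::{field,finite} set) ^ m"
  using card_UNIV_field_ge_2[where 'a = 'a] power_increasing[OF assms, of "card (UNIV :: 'a set)"]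
  by simp

lemma power_card_UNIV_minus_1_eq_1:
  fixes x :: "'a::{field,finite}"
  assumes "x \<noteq> 0"
  shows "x ^ (card (UNIV :: 'a set) - 1) = 1"
proof -
  define U where "U = UNIV - {0::'a}"
  have card_U: "card U = card (UNIV :: 'a set) - 1"
    by (simp add: U_def card_Diff_singleton)
  have "bij_betw ((*) x) U U"
    by (rule bij_betwI[where g = "\<lambda>y. y / x"]) (use assms in \<open>auto simp: U_def\<close>)
  then have "\<Prod>U = (\<Prod>y\<in>U. x * y)"
    by (rule prod.reindex_bij_betw[symmetric])
  also have "\<dots> = x ^ card U * \<Prod>U"
    by (simp add: prod.distrib)
  finally have "x ^ card U * \<Prod>U = 1 * \<Prod>U"
    by simp
  moreover have "\<Prod>U \<noteq> 0"
    by (simp add: U_def)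
  ultimately show ?thesis
    unfolding card_U by (rule mult_right_cancel[THEN iffD1, rotated])
qed

lemma power_card_UNIV_eq_self:
  fixes x :: "'a::{field,finite}"
  shows "x ^ card (UNIV :: 'a set) = x"
proof (cases "x = 0")
  case False
  have "card (UNIV :: 'a set) = Suc (card (UNIV :: 'a set) - 1)"
    using card_UNIV_field_ge_2[where 'a = 'a] by simp
  then show ?thesis
    using power_card_UNIV_minus_1_eq_1[OF False] by (metis mult.right_neutral power_Suc)
qed (use card_UNIV_field_ge_2[where 'a = 'a] in simp)

lemma power_card_UNIV_power_eq_self:
  fixes x :: "'a::{field,finite}"
  shows "x ^ (card (UNIV :: 'a set) ^ j) = x"
proof (induction j)
  case (Suc j)
  then show ?case
    by (metis power_Suc2 power_mult power_card_UNIV_eq_self)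
qed simp

text \<open>The polynomial \<open>(X + 1)^q - X^q - 1\<close> has degree less than \<open>q\<close> but vanishes on the whole
  field, so its coefficients \<open>q choose k\<close> are zero.\<close>
lemma of_nat_card_UNIV_choose_eq_0:
  assumes "0 < k" "k < card (UNIV :: 'a::{field,finite} set)"
  shows "of_nat (card (UNIV :: 'a set) choose k) = (0::'a)"
proof -
  define q where "q = card (UNIV :: 'a set)"
  define P :: "'a poly" where "P = [:1, 1:] ^ q - [:0, 1:] ^ q - 1"
  have coeff_P: "coeff P i = (if 0 < i \<and> i < q then of_nat (q choose i) else 0)" for i
  proof -
    have "coeff ([:1, 1:] ^ q) i = (of_nat (q choose i) :: 'a)"
      using coeff_linear_poly_power[of i q "1::'a" 1] degree_power_le[of "[:1, 1::'a:]" q]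
      by (cases "i \<le> q") (auto simp: coeff_eq_0 binomial_eq_0)
    moreover have "[:0, 1:] ^ q = (monom 1 q :: 'a poly)"
      by (simp add: monom_altdef)
    ultimately show ?thesis
      using assms by (auto simp: P_def coeff_monom q_def binomial_eq_0)
  qed
  have "P = 0"
  proof (rule ccontr)
    assume "P \<noteq> 0"
    have "degree P \<le> q - 1"
      by (rule degree_le) (auto simp: coeff_P)
    then have "degree P < q"
      using card_UNIV_field_ge_2[where 'a = 'a] by (simp add: q_def)
    moreover have "{x. poly P x = 0} = UNIV"
      by (simp add: P_def q_def power_card_UNIV_eq_self)
    ultimately show False
      using card_poly_roots_bound[OF \<open>P \<noteq> 0\<close>] by (simp add: q_def)
  qed
  then show ?thesis
    using assms coeff_P[of k] by (simp add: q_def)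
qed

lemma of_nat_card_UNIV_eq_0: "of_nat (card (UNIV :: 'a::{field,finite} set)) = (0::'a)"
  using of_nat_card_UNIV_choose_eq_0[of 1, where 'a = 'a] card_UNIV_field_ge_2[where 'a = 'a]
  by simp

lemma add_power_eq_if_of_nat_choose_eq_0:
  fixes x y :: "'b::comm_semiring_1"
  assumes "0 < n" and "\<And>k. 0 < k \<Longrightarrow> k < n \<Longrightarrow> of_nat (n choose k) = (0::'b)"
  shows "(x + y) ^ n = x ^ n + y ^ n"
proof -
  have "(x + y) ^ n = (\<Sum>k\<le>n. of_nat (n choose k) * x ^ k * y ^ (n - k))"
    by (rule binomial_ring)
  also have "\<dots> = (\<Sum>k\<in>{0, n}. of_nat (n choose k) * x ^ k * y ^ (n - k))"
    by (rule sum.mono_neutral_right) (auto simp: assms(2))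
  finally show ?thesis
    using assms(1) by (simp add: add.commute)
qed

lemma add_power_power_eq:
  fixes x y :: "'b::comm_semiring_1"
  assumes "\<And>x y :: 'b. (x + y) ^ n = x ^ n + y ^ n"
  shows "(x + y) ^ (n ^ j) = x ^ (n ^ j) + y ^ (n ^ j)"
proof (induction j)
  case (Suc j)
  then show ?case
    by (metis power_Suc2 power_mult assms)
qed simp

lemma poly_add_power_card_UNIV_power:
  fixes g h :: "'a::{field,finite} poly"
  shows "(g + h) ^ (card (UNIV :: 'a set) ^ j) = g ^ (card (UNIV :: 'a set) ^ j) + h ^ (card (UNIV :: 'a set) ^ j)"
proof (rule add_power_power_eq)
  fix g h :: "'a poly"
  show "(g + h) ^ card (UNIV :: 'a set) = g ^ card (UNIV :: 'a set) + h ^ card (UNIV :: 'a set)"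
    using card_UNIV_field_ge_2[where 'a = 'a]
    by (intro add_power_eq_if_of_nat_choose_eq_0) (simp_all add: of_nat_poly of_nat_card_UNIV_choose_eq_0)
qed

lemma dvd_power_card_UNIV_power_minus_self:
  fixes p g :: "'a::{field,finite} poly"
  assumes "p dvd [:0, 1:] ^ (card (UNIV :: 'a set) ^ j) - [:0, 1:]"
  shows "p dvd g ^ (card (UNIV :: 'a set) ^ j) - g"
proof (induction g)
  case 0
  then show ?case
    by (simp add: power_0_left)
next
  case (pCons a g)
  define N where "N = card (UNIV :: 'a set) ^ j"
  define X :: "'a poly" where "X = [:0, 1:]"
  have pCons_eq: "pCons a g = [:a:] + X * g"
    by (simp add: X_def)
  have "pCons a g ^ N = [:a:] ^ N + (X * g) ^ N"
    unfolding pCons_eq N_def by (rule poly_add_power_card_UNIV_power)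
  also have "\<dots> = [:a:] + X ^ N * g ^ N"
    by (simp add: N_def power_mult_distrib poly_const_pow power_card_UNIV_power_eq_self)
  finally have "pCons a g ^ N - pCons a g = X ^ N * (g ^ N - g) + g * (X ^ N - X)"
    by (simp add: X_def algebra_simps)
  also have "p dvd \<dots>"
    using pCons.IH assms by (simp add: N_def X_def)
  finally show ?case
    by (simp add: N_def)
qed

lemma card_roots_mod_prime_le_degree:
  fixes P :: "'a::idom poly" and p :: 'a
  assumes "prime_elem p" and "\<not> p dvd lead_coeff P" and "finite G"
    and "\<And>g. g \<in> G \<Longrightarrow> p dvd poly P g"
    and "\<And>g h. g \<in> G \<Longrightarrow> h \<in> G \<Longrightarrow> p dvd g - h \<Longrightarrow> g = h"
  shows "card G \<le> degree P"
  using assms(2-)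
proof (induction "degree P" arbitrary: P G)
  case 0
  then have "P = [:lead_coeff P:]"
    by (metis degree_0_id)
  then have "poly P g = lead_coeff P" for g
    by (metis add.right_neutral mult_zero_right poly_0 poly_pCons)
  then have "G = {}"
    using "0.prems"(1,3) by force
  then show ?case
    by simp
next
  case (Suc n)
  show ?case
  proof (cases "G = {}")
    case False
    then obtain r where r: "r \<in> G"
      by blast
    define Q where "Q = synthetic_div P r"
    have P_eq: "P = [:-r, 1:] * Q + [:poly P r:]"
      unfolding Q_def by (rule synthetic_div_correct'[symmetric])
    have degree_Q: "degree Q = n"
      using Suc.hyps(2) by (simp add: Q_def degree_synthetic_div)
    have "lead_coeff P = coeff ([:-r, 1:] * Q + [:poly P r:]) (Suc n)"
      by (metis P_eq Suc.hyps(2))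
    also have "\<dots> = lead_coeff Q"
      by (simp add: degree_Q coeff_eq_0)
    finally have "lead_coeff Q = lead_coeff P"
      by simp
    have "card (G - {r}) \<le> degree Q"
    proof (rule Suc.hyps(1))
      fix g assume g: "g \<in> G - {r}"
      have "(g - r) * poly Q g = poly P g - poly P r"
        using arg_cong[OF P_eq, of "\<lambda>P. poly P g"] by (simp add: algebra_simps)
      moreover have "\<not> p dvd g - r"
        using Suc.prems(4) g r by blast
      ultimately show "p dvd poly Q g"
        using Suc.prems(3) g r assms(1) by (metis DiffD1 dvd_diff prime_elem_dvd_mult_iff)
    qed (use degree_Q Suc.prems \<open>lead_coeff Q = lead_coeff P\<close> in auto)
    then show ?thesis
      using Suc.hyps(2) Suc.prems(2) r degree_Q by (simp add: card_Diff_singleton)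
  qed simp
qed

definition polys_below :: "nat \<Rightarrow> 'a::zero poly set" where
  "polys_below d = {g. \<forall>i\<ge>d. coeff g i = 0}"

lemma polys_below_Suc: "polys_below (Suc d) = (\<lambda>(a, g). pCons a g) ` (UNIV \<times> polys_below d)"
proof (intro equalityI subsetI)
  fix h :: "'a poly"
  assume "h \<in> polys_below (Suc d)"
  then show "h \<in> (\<lambda>(a, g). pCons a g) ` (UNIV \<times> polys_below d)"
    by (cases h) (force simp: polys_below_def)
qed (auto simp: polys_below_def less_eq_nat.simps(2) split: nat.splits)

lemma finite_polys_below: "finite (polys_below d :: 'a::{zero,finite} poly set)"
proof (induction d)
  case 0
  have "polys_below 0 \<subseteq> {0 :: 'a poly}"
    by (auto simp: polys_below_def poly_eq_iff)
  then show ?case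
    by (rule finite_subset) simp
qed (simp add: polys_below_Suc)

lemma card_polys_below: "card (polys_below d :: 'a::{zero,finite} poly set) = card (UNIV :: 'a set) ^ d"
proof (induction d)
  case 0
  have "polys_below 0 = {0 :: 'a poly}"
    by (auto simp: polys_below_def poly_eq_iff)
  then show ?case
    by simp
next
  case (Suc d)
  have "inj_on (\<lambda>(a, g). pCons a (g :: 'a poly)) (UNIV \<times> polys_below d)"
    by (auto simp: inj_on_def)
  then show ?case
    using Suc finite_polys_below by (simp add: polys_below_Suc card_image card_cartesian_product)
qed

lemma degree_less_if_in_polys_below: "g \<in> polys_below d \<Longrightarrow> g \<noteq> 0 \<Longrightarrow> degree g < d"
  unfolding polys_below_def using leading_coeff_0_iff not_less by blast

lemma finite_degree_le: "finite {g :: 'a::{zero,finite} poly. degree g \<le> n}"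
proof (rule finite_subset)
  show "{g :: 'a poly. degree g \<le> n} \<subseteq> polys_below (Suc n)"
    by (auto simp: polys_below_def coeff_eq_0)
qed (rule finite_polys_below)

lemma
  assumes "2 \<le> N"
  shows degree_X_power_minus_X: "degree ([:0, 1:] ^ N - [:0, 1:] :: 'a::comm_ring_1 poly) = N"
    and lead_coeff_X_power_minus_X: "lead_coeff ([:0, 1:] ^ N - [:0, 1:] :: 'a poly) = 1"
proof -
  have X_power_minus_X: "[:0, 1:] ^ N - [:0, 1:] = - [:0, 1:] + (monom 1 N :: 'a poly)"
    by (simp add: monom_altdef)
  have less: "degree (- [:0, 1:]) < degree (monom 1 N :: 'a poly)"
    using assms by (simp add: degree_monom_eq)
  show "degree ([:0, 1:] ^ N - [:0, 1:] :: 'a poly) = N"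
    unfolding X_power_minus_X degree_add_eq_right[OF less] by (simp add: degree_monom_eq)
  show "lead_coeff ([:0, 1:] ^ N - [:0, 1:] :: 'a poly) = 1"
    unfolding X_power_minus_X lead_coeff_add_le[OF less] by (simp add: degree_monom_eq)
qed

lemma degree_le_if_dvd_X_power_card_UNIV_power_minus_X:
  fixes p :: "'a::{field,finite} poly"
  assumes "irreducible p" and "1 \<le> m"
    and "p dvd [:0, 1:] ^ (card (UNIV :: 'a set) ^ m) - [:0, 1:]"
  shows "degree p \<le> m"
proof -
  define q where "q = card (UNIV :: 'a set)"
  define N where "N = q ^ m"
  have "2 \<le> q"
    unfolding q_def by (rule card_UNIV_field_ge_2)
  have "2 \<le> N"
    unfolding N_def q_def using assms(2) by (rule card_UNIV_power_ge_2)
  text \<open>The residues modulo \<open>p\<close> of the polynomials of degree less than \<open>degree p\<close> are pairwise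
    distinct roots of \<open>Y^N - Y\<close>.\<close>
  have "card (polys_below (degree p) :: 'a poly set) \<le> degree ([:0, 1:] ^ N - [:0, 1:] :: 'a poly poly)"
  proof (rule card_roots_mod_prime_le_degree)
    show "prime_elem p"
      using assms(1) by (rule field_poly_irreducible_imp_prime)
    show "\<not> p dvd lead_coeff ([:0, 1:] ^ N - [:0, 1:])"
      unfolding lead_coeff_X_power_minus_X[OF \<open>2 \<le> N\<close>]
      using assms(1) by (simp add: irreducible_not_unit)
    show "finite (polys_below (degree p) :: 'a poly set)"
      by (rule finite_polys_below)
    show "p dvd poly ([:0, 1:] ^ N - [:0, 1:]) g" for g
      using dvd_power_card_UNIV_power_minus_self[OF assms(3)] by (simp add: N_def q_def)
    show "g = h" if "g \<in> polys_below (degree p)" "h \<in> polys_below (degree p)" "p dvd g - h" for g h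
    proof (rule ccontr)
      assume "g \<noteq> h"
      then have "degree (g - h) < degree p"
        using that(1,2) by (intro degree_less_if_in_polys_below) (auto simp: polys_below_def)
      moreover have "degree p \<le> degree (g - h)"
        using that(3) \<open>g \<noteq> h\<close> by (simp add: dvd_imp_degree_le)
      ultimately show False
        by simp
    qed
  qed
  then have "q ^ degree p \<le> q ^ m"
    using \<open>2 \<le> N\<close> by (simp add: card_polys_below degree_X_power_minus_X N_def q_def)
  then show ?thesis
    using \<open>2 \<le> q\<close> by (simp add: power_le_imp_le_exp)
qed

definition monic_irreducible_divisors :: "'a::field poly \<Rightarrow> 'a poly set" where
  "monic_irreducible_divisors f = {p. lead_coeff p = 1 \<and> irreducible p \<and> p dvd f}"

lemma monic_irreducible_dvd_imp_eq:
  fixes p r :: "'a::field poly"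
  assumes "lead_coeff p = 1" "irreducible p" "lead_coeff r = 1" "irreducible r" "p dvd r"
  shows "p = r"
proof -
  obtain k where k: "r = p * k"
    using assms(5) by blast
  then have "is_unit k"
    using assms(2,4) irreducible_not_unit irreducibleD by blast
  then obtain c where "k = [:c:]"
    by (elim is_unit_polyE)
  moreover have "c = 1"
    using assms(1,3) k \<open>k = [:c:]\<close> by (simp add: lead_coeff_mult split: if_splits)
  ultimately show ?thesis
    using k by simp
qed

lemma prod_dvd_if_subset_monic_irreducible_divisors:
  fixes f :: "'a::field poly"
  assumes "finite A" and "A \<subseteq> monic_irreducible_divisors f"
  shows "\<Prod>A dvd f"
  using assms
proof (induction A rule: finite_induct)
  case (insert p A)
  then have p: "lead_coeff p = 1" "irreducible p" "p dvd f" and "\<Prod>A dvd f"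
    by (auto simp: monic_irreducible_divisors_def)
  then obtain h where h: "f = \<Prod>A * h"
    by blast
  have prime: "prime_elem p"
    using p(2) by (rule field_poly_irreducible_imp_prime)
  have "\<not> p dvd \<Prod>A"
  proof
    assume "p dvd \<Prod>A"
    then obtain a where "a \<in> A" "p dvd a"
      using prime_elem_dvd_prod_msetE[OF prime, of "mset_set A"] insert.hyps(1)
      by (auto simp: prod_unfold_prod_mset)
    then have "p = a"
      using insert.prems p by (intro monic_irreducible_dvd_imp_eq) (auto simp: monic_irreducible_divisors_def)
    with \<open>a \<in> A\<close> insert.hyps(2) show False
      by simp
  qed
  then have "p dvd h"
    using p(3) h prime by (metis prime_elem_dvd_mult_iff)
  then show ?case
    using h insert.hyps by (auto simp: mult.left_commute intro: mult_dvd_mono)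
qed simp

lemma finite_monic_irreducible_divisors:
  fixes f :: "'a::{field,finite} poly"
  assumes "f \<noteq> 0"
  shows "finite (monic_irreducible_divisors f)"
proof (rule finite_subset)
  show "monic_irreducible_divisors f \<subseteq> {g. degree g \<le> degree f}"
    using assms by (auto simp: monic_irreducible_divisors_def dvd_imp_degree_le)
qed (rule finite_degree_le)

lemma sum_degree_monic_irreducible_divisors_le:
  fixes f :: "'a::{field,finite} poly"
  assumes "f \<noteq> 0"
  shows "(\<Sum>p\<in>monic_irreducible_divisors f. degree p) \<le> degree f"
proof -
  have "(\<Sum>p\<in>monic_irreducible_divisors f. degree p) = degree (\<Prod>(monic_irreducible_divisors f))"
    by (rule degree_prod_eq_sum_degree[symmetric]) (auto simp: monic_irreducible_divisors_def)
  also have "\<dots> \<le> degree f"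
    using assms finite_monic_irreducible_divisors[OF assms]
    by (intro dvd_imp_degree_le prod_dvd_if_subset_monic_irreducible_divisors) auto
  finally show ?thesis .
qed

lemma monic_irreducible_divisors_nonempty:
  fixes h :: "'a::field poly"
  assumes "0 < degree h"
  shows "monic_irreducible_divisors h \<noteq> {}"
  using assms
proof (induction "degree h" arbitrary: h rule: less_induct)
  case less
  have "h \<noteq> 0"
    using less.prems by auto
  show ?case
  proof (cases "irreducible h")
    case True
    define r where "r = smult (inverse (lead_coeff h)) h"
    have "lead_coeff r = 1" and "r dvd h"
      using \<open>h \<noteq> 0\<close> by (auto simp: r_def smult_dvd_iff)
    moreover have "irreducible r"
      using True \<open>h \<noteq> 0\<close> irreducible_mult_unit_left[of "[:inverse (lead_coeff h):]" h]
      by (simp add: r_def is_unit_const_poly_iff dvd_field_iff)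
    ultimately show ?thesis
      by (auto simp: monic_irreducible_divisors_def)
  next
    case False
    then obtain a b where "h = a * b" "\<not> is_unit a" "\<not> is_unit b"
      using less.prems \<open>h \<noteq> 0\<close> by (auto simp: irreducible_def is_unit_iff_degree)
    moreover from this have "a \<noteq> 0" "b \<noteq> 0"
      using \<open>h \<noteq> 0\<close> by auto
    ultimately have "0 < degree a" "degree a < degree h"
      by (auto simp: is_unit_iff_degree degree_mult_eq)
    then have "monic_irreducible_divisors a \<noteq> {}"
      by (rule less.hyps[rotated])
    then show ?thesis
      using \<open>h = a * b\<close> by (auto simp: monic_irreducible_divisors_def)
  qed
qed

text \<open>If \<open>r\<^sup>2\<close> divided \<open>g\<close>, then \<open>r\<close> would divide the unit \<open>pderiv g\<close>; so \<open>g\<close> is, up to a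
  constant, the product of its monic irreducible divisors.\<close>
lemma degree_eq_sum_monic_irreducible_divisors:
  fixes g :: "'a::{field,finite} poly"
  assumes "g \<noteq> 0" and "is_unit (pderiv g)"
  shows "degree g = (\<Sum>p\<in>monic_irreducible_divisors g. degree p)"
proof -
  define A where "A = monic_irreducible_divisors g"
  have "finite A"
    unfolding A_def using assms(1) by (rule finite_monic_irreducible_divisors)
  then have "\<Prod>A dvd g"
    unfolding A_def by (rule prod_dvd_if_subset_monic_irreducible_divisors) simp
  then obtain h where h: "g = \<Prod>A * h"
    by blast
  have "degree h = 0"
  proof (rule ccontr)
    assume "degree h \<noteq> 0"
    then obtain r where r: "r \<in> monic_irreducible_divisors h"
      using monic_irreducible_divisors_nonempty by blast
    have "r dvd g"
      using r unfolding h by (simp add: monic_irreducible_divisors_def)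
    then have "r \<in> A"
      using r by (simp add: A_def monic_irreducible_divisors_def)
    then have "r * r dvd g"
      using r h \<open>finite A\<close> by (auto simp: monic_irreducible_divisors_def intro: mult_dvd_mono)
    then obtain s where "g = r * r * s"
      by blast
    then have "r dvd pderiv g"
      by (simp add: pderiv_mult)
    then show False
      using assms(2) r
      by (auto simp: monic_irreducible_divisors_def irreducible_not_unit dest: dvd_unit_imp_unit)
  qed
  have "degree g = degree (\<Prod>A) + degree h"
    using h assms(1) by (simp add: degree_mult_eq)
  also have "\<dots> = (\<Sum>p\<in>A. degree p)"
  proof -
    have "\<forall>p\<in>A. p \<noteq> 0"
      by (auto simp: A_def monic_irreducible_divisors_def)
    then show ?thesis
      using \<open>degree h = 0\<close> degree_prod_eq_sum_degree by simp
  qed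
  finally show ?thesis
    unfolding A_def .
qed

lemma card_UNIV_power_le_sum_degree:
  assumes "1 \<le> m"
  shows "card (UNIV :: 'a::{field,finite} set) ^ m
    \<le> (\<Sum>p\<in>{p :: 'a poly. lead_coeff p = 1 \<and> irreducible p \<and> degree p \<le> m}. degree p)"
proof -
  define N where "N = card (UNIV :: 'a set) ^ m"
  define g :: "'a poly" where "g = [:0, 1:] ^ N - [:0, 1:]"
  have "2 \<le> N"
    unfolding N_def using assms by (rule card_UNIV_power_ge_2)
  have "of_nat N = (0 :: 'a)"
    using assms by (simp add: N_def of_nat_power of_nat_card_UNIV_eq_0)
  then have "pderiv g = [:-1:]"
    by (simp add: g_def pderiv_diff pderiv_power pderiv_pCons)
  have "N = degree g"
    using \<open>2 \<le> N\<close> by (simp add: g_def degree_X_power_minus_X)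
  also have "\<dots> = (\<Sum>p\<in>monic_irreducible_divisors g. degree p)"
    using \<open>2 \<le> N\<close> \<open>pderiv g = [:-1:]\<close>
    by (intro degree_eq_sum_monic_irreducible_divisors)
      (auto simp: g_def degree_X_power_minus_X is_unit_const_poly_iff)
  also have "\<dots> \<le> (\<Sum>p\<in>{p :: 'a poly. lead_coeff p = 1 \<and> irreducible p \<and> degree p \<le> m}. degree p)"
  proof (rule sum_mono2)
    show "finite {p :: 'a poly. lead_coeff p = 1 \<and> irreducible p \<and> degree p \<le> m}"
      by (rule finite_subset[OF _ finite_degree_le]) auto
    show "monic_irreducible_divisors g \<subseteq> {p. lead_coeff p = 1 \<and> irreducible p \<and> degree p \<le> m}"
      using assms by (auto simp: monic_irreducible_divisors_def g_def N_def
          intro: degree_le_if_dvd_X_power_card_UNIV_power_minus_X)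
  qed simp
  finally show ?thesis
    unfolding N_def .
qed

text \<open>An injection from the heavy part \<open>S - T\<close> into \<open>T - S\<close> exists because every element of
  \<open>S - T\<close> has weight at least \<open>m + 1\<close> while those of \<open>T - S\<close> weigh at most \<open>m\<close>.\<close>
lemma prod_le_prod_if_sum_le_sum:
  fixes d :: "'b \<Rightarrow> nat" and w :: "'b \<Rightarrow> 'c::linordered_idom"
  assumes "finite S" and "finite T"
    and "\<And>x. x \<in> T \<Longrightarrow> d x \<le> m" and "\<And>x. x \<in> S - T \<Longrightarrow> m < d x"
    and "\<And>x. x \<in> S \<union> T \<Longrightarrow> 1 \<le> w x"
    and "\<And>x y. x \<in> S - T \<Longrightarrow> y \<in> T \<Longrightarrow> w x \<le> w y"
    and "(\<Sum>x\<in>S. d x) \<le> (\<Sum>x\<in>T. d x)"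
  shows "(\<Prod>x\<in>S. w x) \<le> (\<Prod>x\<in>T. w x)"
proof -
  have "card (S - T) * Suc m \<le> (\<Sum>x\<in>S - T. d x)"
    using sum_bounded_below[of "S - T" "Suc m" d] assms(4) by (simp add: Suc_le_eq mult.commute)
  also have "\<dots> \<le> (\<Sum>x\<in>T - S. d x)"
    using assms(7) sum.Int_Diff[OF assms(1), of d T] sum.Int_Diff[OF assms(2), of d S]
    by (simp add: Int_commute)
  also have "\<dots> \<le> card (T - S) * m"
    using sum_bounded_above[of "T - S" d m] assms(3) by simp
  finally have weight: "card (S - T) * Suc m \<le> card (T - S) * m" .
  have "card (S - T) \<le> card (T - S)"
  proof (rule ccontr)
    assume "\<not> card (S - T) \<le> card (T - S)"
    moreover from this have "card (T - S) * m \<le> card (S - T) * m"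
      by simp
    ultimately show False
      using weight by (simp only: mult_Suc_right)
  qed
  then obtain \<iota> where \<iota>: "inj_on \<iota> (S - T)" "\<iota> ` (S - T) \<subseteq> T - S"
    using card_le_inj[of "S - T" "T - S"] assms(1,2) by auto
  have "(\<Prod>x\<in>S - T. w x) \<le> (\<Prod>x\<in>S - T. w (\<iota> x))"
    using \<iota>(2) assms(5,6) by (intro prod_mono) (force intro: order_trans[OF zero_le_one])
  also have "\<dots> = (\<Prod>y\<in>\<iota> ` (S - T). w y)"
    using \<iota>(1) by (simp add: prod.reindex)
  also have "\<dots> \<le> (\<Prod>y\<in>T - S. w y)"
    using \<iota>(2) assms(2,5) by (intro prod_mono2) (auto intro: order_trans[OF zero_le_one])
  finally have "(\<Prod>x\<in>S - T. w x) \<le> (\<Prod>y\<in>T - S. w y)" .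
  then have "(\<Prod>x\<in>S \<inter> T. w x) * (\<Prod>x\<in>S - T. w x)
      \<le> (\<Prod>x\<in>T \<inter> S. w x) * (\<Prod>x\<in>T - S. w x)"
    using assms(5)
    by (auto simp: Int_commute intro!: mult_left_mono prod_nonneg intro: order_trans[OF zero_le_one])
  then show ?thesis
    by (simp add: prod.Int_Diff[OF assms(1), symmetric] prod.Int_Diff[OF assms(2), symmetric])
qed

lemma inverse_poly_norm_le:
  fixes p r :: "'a::{field,finite} poly"
  assumes "degree p \<le> degree r"
  shows "1 / poly_norm r \<le> 1 / poly_norm p"
  using assms card_UNIV_field_ge_2[where 'a = 'a]
  by (auto simp: poly_norm_def intro!: divide_left_mono power_increasing)

theorem lemma1:
  fixes f :: "'a::{field,finite} poly" and m :: nat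
  assumes "f \<noteq> 0" and "m \<ge> 1" and "real (card (UNIV :: 'a set)) ^ m \<ge> real (degree f)"
  shows "E_fun f \<le> (\<Prod>p\<in>{p :: 'a poly. lead_coeff p = 1 \<and> irreducible p \<and> degree p \<le> m}. 1 + 1 / poly_norm p)"
proof -
  define Sm where "Sm = {p :: 'a poly. lead_coeff p = 1 \<and> irreducible p \<and> degree p \<le> m}"
  have "degree f \<le> card (UNIV :: 'a set) ^ m"
    using assms(3) by (simp flip: of_nat_power)
  then have "(\<Sum>p\<in>monic_irreducible_divisors f. degree p) \<le> (\<Sum>p\<in>Sm. degree p)"
    using sum_degree_monic_irreducible_divisors_le[OF assms(1)]
      card_UNIV_power_le_sum_degree[OF assms(2), where 'a = 'a]
    unfolding Sm_def by linarith
  then have "(\<Prod>p\<in>monic_irreducible_divisors f. 1 + 1 / poly_norm p)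
      \<le> (\<Prod>p\<in>Sm. 1 + 1 / poly_norm p)"
  proof (rule prod_le_prod_if_sum_le_sum[rotated -1])
    show "finite Sm"
      unfolding Sm_def by (rule finite_subset[OF _ finite_degree_le]) auto
    show "1 + 1 / poly_norm p \<le> 1 + 1 / poly_norm r"
      if "p \<in> monic_irreducible_divisors f - Sm" and "r \<in> Sm" for p r
      using that by (intro add_left_mono inverse_poly_norm_le)
        (auto simp: Sm_def monic_irreducible_divisors_def)
  qed (use finite_monic_irreducible_divisors[OF assms(1)] in
      \<open>auto simp: Sm_def monic_irreducible_divisors_def poly_norm_def\<close>)
  then show ?thesis
    by (simp add: E_fun_def Sm_def monic_irreducible_divisors_def)
qed

end
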